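(* Let $0 < q < 1$ be real and let $d \geq 3$, $1 \leq r < \frac d2$ be integers. Let $E_1, E_2, \dots$ be independent events with $\mathbf{P}(E_j) = \frac{q^j}{1+q^j}$, let $F_j$ be the complement of $E_j$, and write $E_n^k := E_{nd+k}$, $F_n^k := F_{nd+k}$ (juxtaposition of events denotes intersection). Define \begin{align*} U_{d,r} &:= \bigcap_{n\geq0}\left(E_n^r F_n^{d-r} F_{n+1}^0 \cup F_n^r\right)\left(E_n^{d-r} F_{n+1}^0 F_{n+1}^r \cup F_n^{d-r}\right)\left(E_{n+1}^0 F_{n+1}^r F_{n+1}^{d-r} F_{n+2}^0 \cup F_{n+1}^0\right),\\ V_{d,r} &:= \bigcap_{n\geq1}\left(E_n^r F_n^{d-r} F_{n+1}^0 \cup F_n^r\right)\left(E_n^{d-r} F_{n+1}^0 F_{n+1}^r \cup F_n^{d-r}\right)\left(E_{n+1}^0 F_{n+1}^r F_{n+1}^{d-r} F_{n+2}^0 \cup F_{n+1}^0\right). \end{align*} Then (1) $\displaystyle \mathbf{P}(U_{d,r} \mid V_{d,r}) = \frac{1}{(1+q^r)(1+q^{d-r})(1+q^d)} \cdot \frac{1}{g_3\left(-q^r;q^d\right)}$; (2) $\mathbf{P}(F_r \cap F_{d-r} \cap F_d \mid U_{d,r}) = g_3\left(-q^r; q^d\right)$.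
   Context: $(a;q)_n := \prod_{j=0}^{n-1}(1-aq^j)$ and $g_3(x;q) := \sum_{n\geq0}\frac{q^{n(n+1)}}{(x;q)_{n+1}(x^{-1}q;q)_{n+1}}$ is Hickerson's universal mock theta function. *)

theory Defs
  imports "HOL-Probability.Probability"
begin

definition qpoch :: "'a::real_normed_field \<Rightarrow> 'a \<Rightarrow> nat \<Rightarrow> 'a" where
  "qpoch a q n = (\<Prod>j<n. 1 - a * q ^ j)"

definition g3 :: "'a::{real_normed_field,banach} \<Rightarrow> 'a \<Rightarrow> 'a" where
  "g3 x q = (\<Sum>n. q ^ (n * (n + 1)) /
      (qpoch x q (n + 1) * qpoch (inverse x * q) q (n + 1)))"

text \<open>Given events E (indexed from 1) in the probability space M,
  Ev d E n k = E_n^k = E_{nd+k}, Fv d E n k = F_n^k its complement.\<close>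
definition Ev :: "nat \<Rightarrow> (nat \<Rightarrow> 'a set) \<Rightarrow> nat \<Rightarrow> nat \<Rightarrow> 'a set" where
  "Ev d E n k = E (n * d + k)"

definition Fv :: "'a measure \<Rightarrow> nat \<Rightarrow> (nat \<Rightarrow> 'a set) \<Rightarrow> nat \<Rightarrow> nat \<Rightarrow> 'a set" where
  "Fv M d E n k = space M - E (n * d + k)"

definition blk :: "'a measure \<Rightarrow> nat \<Rightarrow> nat \<Rightarrow> (nat \<Rightarrow> 'a set) \<Rightarrow> nat \<Rightarrow> 'a set" where
  "blk M d r E n =
     ((Ev d E n r \<inter> Fv M d E n (d - r) \<inter> Fv M d E (n + 1) 0) \<union> Fv M d E n r)
   \<inter> ((Ev d E n (d - r) \<inter> Fv M d E (n + 1) 0 \<inter> Fv M d E (n + 1) r) \<union> Fv M d E n (d - r))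
   \<inter> ((Ev d E (n + 1) 0 \<inter> Fv M d E (n + 1) r \<inter> Fv M d E (n + 1) (d - r)
        \<inter> Fv M d E (n + 2) 0) \<union> Fv M d E (n + 1) 0)"

definition Uset :: "'a measure \<Rightarrow> nat \<Rightarrow> nat \<Rightarrow> (nat \<Rightarrow> 'a set) \<Rightarrow> 'a set" where
  "Uset M d r E = space M \<inter> (\<Inter>n. blk M d r E n)"

definition Vset :: "'a measure \<Rightarrow> nat \<Rightarrow> nat \<Rightarrow> (nat \<Rightarrow> 'a set) \<Rightarrow> 'a set" where
  "Vset M d r E = space M \<inter> (\<Inter>n\<in>{1..}. blk M d r E n)"

definition cond_prob :: "'a measure \<Rightarrow> 'a set \<Rightarrow> 'a set \<Rightarrow> real" where
  "cond_prob M A B = measure M (A \<inter> B) / measure M B"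

end

theory Submission
  imports Defs
begin

text \<open>
  Write \<open>x = q^r\<close>, \<open>y = q^(d-r)\<close>, \<open>Q = q^d = x y\<close>, and let \<open>u k\<close> be the probability that
  all blocks from the \<open>k\<close>-th on are satisfied, so that \<open>P(U) = u 0\<close> and \<open>P(V) = u 1\<close>.
  Splitting according to the events of blocks \<open>k\<close> and \<open>k+1\<close>, independence gives a three-term
  recurrence \<open>u k = \<alpha> k * u (k+1) + \<gamma> k * u (k+2)\<close> with \<open>|\<gamma> k| \<le> 1/2\<close>.

  The q-series \<open>\<Phi>(z) = \<Sum>n. Q^(n\<^sup>2) z^n (z;Q)_n / ((Q;Q)_n (-xz;Q)_n (-yz;Q)_n)\<close> satisfies a
  second-order q-difference equation, proved term by term with a telescoping remainder, and
  this makes \<open>Y k = \<Phi>(Q^k) (-Q;Q)_k\<close> a second bounded solution of the same recurrence.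
  Their Casoratian \<open>u k * Y (k+1) - u (k+1) * Y k\<close> is multiplied by \<open>-\<gamma> k\<close> at each step,
  so it decays geometrically and hence vanishes: \<open>u 0 * Y 1 = u 1 * Y 0\<close>. As \<open>\<Phi>(1) = 1\<close> and
  \<open>\<Phi>(Q) = (1+x)(1+y) g\<^sub>3(-x;Q)\<close>, this gives \<open>u 1 = (1+x)(1+y)(1+Q) g\<^sub>3(-x;Q) u 0\<close>, which is
  (1); for (2), independence gives \<open>P(F\<^sub>r F\<^sub>d\<^sub>-\<^sub>r F\<^sub>d U) = u 1 / ((1+x)(1+y)(1+Q))\<close>.
\<close>

section \<open>q-Pochhammer symbols\<close>

lemma qpoch_0 [simp]: "qpoch a q 0 = 1"
  by (simp add: qpoch_def)

lemma qpoch_Suc: "qpoch a q (Suc n) = qpoch a q n * (1 - a * q ^ n)"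
  by (simp add: qpoch_def)

lemma qpoch_Suc_shift: "qpoch a q (Suc n) = (1 - a) * qpoch (a * q) q n"
  unfolding qpoch_def by (subst prod.lessThan_Suc_shift) (simp add: algebra_simps)

lemma qpoch_minus_Suc_shift:
  "qpoch (- (x * z)) q (Suc n) = (1 + x * z) * qpoch (- (x * (q * z))) q n"
  by (simp add: qpoch_Suc_shift mult_ac)

lemma qpoch_minus_pair_Suc_shift:
  "qpoch (- (x*z)) q (Suc n) * qpoch (- (y*z)) q (Suc n)
    = (1 + x*z) * (1 + y*z) * (qpoch (- (x*(q*z))) q n * qpoch (- (y*(q*z))) q n)"
  by (simp add: qpoch_minus_Suc_shift mult_ac)

lemma qpoch_bounds:
  fixes a q :: real
  assumes "0 \<le> a" "a \<le> 1" "0 \<le> q" "q \<le> 1"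
  shows "0 \<le> qpoch a q n" "qpoch a q n \<le> 1"
proof -
  have "0 \<le> a * q ^ j" "a * q ^ j \<le> 1" for j
    using assms by (simp_all add: mult_le_one power_le_one)
  then show "0 \<le> qpoch a q n" "qpoch a q n \<le> 1"
    unfolding qpoch_def by (simp_all add: prod_nonneg prod_le_1)
qed

lemma qpoch_minus_ge_one:
  fixes a q :: real
  assumes "0 \<le> a" "0 \<le> q"
  shows "1 \<le> qpoch (- a) q n"
  unfolding qpoch_def using assms by (intro prod_ge_1) simp

lemma qpoch_minus_mult_ge_one:
  fixes a b q :: real
  assumes "0 \<le> a" "0 \<le> b" "0 \<le> q"
  shows "1 \<le> qpoch (- a) q n * qpoch (- b) q n"
proof -
  have "1 * 1 \<le> qpoch (- a) q n * qpoch (- b) q n"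
    using qpoch_minus_ge_one[OF assms(1,3), of n] qpoch_minus_ge_one[OF assms(2,3), of n]
    by (intro mult_mono) auto
  then show ?thesis by simp
qed

lemma qpoch_self_ge:
  fixes q :: real
  assumes "0 \<le> q" "q < 1"
  shows "(1 - q) ^ n \<le> qpoch q q n"
proof -
  have "1 - q \<le> 1 - q * q ^ j" for j
    using assms by (simp add: mult_left_le power_le_one)
  then have "(\<Prod>j<n. 1 - q) \<le> qpoch q q n"
    unfolding qpoch_def using assms by (intro prod_mono) simp
  then show ?thesis by simp
qed

lemma qpoch_self_pos:
  fixes q :: real
  assumes "0 \<le> q" "q < 1"
  shows "0 < qpoch q q n"
  using assms by (intro less_le_trans[OF _ qpoch_self_ge]) auto

lemma qpoch_minus_self_le_exp:
  fixes q :: real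
  assumes "0 \<le> q" "q < 1"
  shows "qpoch (- q) q n \<le> exp (1 / (1 - q))"
proof -
  have "qpoch (- q) q n \<le> (\<Prod>j<n. exp (q ^ Suc j))"
    unfolding qpoch_def using assms by (intro prod_mono) auto
  also have "\<dots> = exp (\<Sum>j<n. q * q ^ j)" by (simp add: exp_sum)
  also have "(\<Sum>j<n. q * q ^ j) \<le> (\<Sum>j<n. q ^ j)"
    using assms by (intro sum_mono) (simp add: mult_left_le_one_le)
  also have "\<dots> = (1 - q ^ n) / (1 - q)" using assms by (simp add: sum_gp_strict)
  also have "\<dots> \<le> 1 / (1 - q)" using assms by (simp add: divide_right_mono)
  finally show ?thesis by simp
qed

section \<open>The q-series \<open>\<Phi>\<close> and its q-difference equation\<close>

definition Phi_term :: "real \<Rightarrow> real \<Rightarrow> real \<Rightarrow> real \<Rightarrow> nat \<Rightarrow> real" where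
  "Phi_term x y q z n = q ^ (n * n) * z ^ n * qpoch z q n /
     (qpoch q q n * (qpoch (- (x * z)) q n * qpoch (- (y * z)) q n))"

definition Phi :: "real \<Rightarrow> real \<Rightarrow> real \<Rightarrow> real \<Rightarrow> real" where
  "Phi x y q z = (\<Sum>n. Phi_term x y q z n)"

definition Phi_majorant :: "real \<Rightarrow> nat \<Rightarrow> real" where
  "Phi_majorant q n = q ^ (n * n) / (1 - q) ^ n"

lemma summable_Phi_majorant:
  fixes q :: real
  assumes "0 \<le> q" "q < 1"
  shows "summable (Phi_majorant q)"
proof -
  have "(\<lambda>n. q ^ n / (1 - q)) \<longlonglongrightarrow> 0 / (1 - q)"
    by (intro tendsto_divide LIMSEQ_power_zero tendsto_const) (use assms in auto)
  from LIMSEQ_D[OF this, of "1/2"] obtain N where N: "\<And>n. n \<ge> N \<Longrightarrow> \<bar>q ^ n / (1 - q)\<bar> < 1/2"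
    by auto
  show ?thesis
  proof (rule summable_comparison_test')
    show "summable (\<lambda>n. (1/2::real) ^ n)" by simp
    fix n assume "N \<le> n"
    have "Phi_majorant q n = (q ^ n / (1 - q)) ^ n"
      by (simp add: Phi_majorant_def power_divide power_mult)
    also have "\<dots> \<le> (1/2) ^ n" using N[OF \<open>N \<le> n\<close>] assms by (intro power_mono) auto
    finally show "norm (Phi_majorant q n) \<le> (1/2) ^ n"
      using assms by (simp add: Phi_majorant_def)
  qed
qed

lemma majorized_quotient:
  fixes q u v w :: real
  assumes "0 \<le> q" "q < 1" "0 \<le> u" "u \<le> 1" "0 \<le> v" "v \<le> 1" "(1 - q) ^ n \<le> w"
  shows "0 \<le> q ^ (n * n) * u * v / w" "q ^ (n * n) * u * v / w \<le> Phi_majorant q n"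
proof -
  have "0 < (1 - q) ^ n" using assms(2) by simp
  then have w: "0 < w" using assms(7) by linarith
  have "u * v \<le> 1" using assms by (simp add: mult_le_one)
  then have "q ^ (n * n) * u * v \<le> q ^ (n * n)"
    using assms by (simp add: mult.assoc mult_left_le)
  then show "q ^ (n * n) * u * v / w \<le> Phi_majorant q n"
    unfolding Phi_majorant_def using assms w by (intro frac_le) auto
  show "0 \<le> q ^ (n * n) * u * v / w" using assms w by simp
qed

lemma Phi_term_bounds:
  fixes x y q z :: real
  assumes "0 \<le> q" "q < 1" "0 \<le> z" "z \<le> 1" "0 \<le> x" "0 \<le> y"
  shows "0 \<le> Phi_term x y q z n" "Phi_term x y q z n \<le> Phi_majorant q n"
proof -
  have "1 \<le> qpoch (- (x * z)) q n * qpoch (- (y * z)) q n"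
    using assms by (intro qpoch_minus_mult_ge_one) auto
  then have "(1 - q) ^ n * 1 \<le> qpoch q q n * (qpoch (- (x * z)) q n * qpoch (- (y * z)) q n)"
    using qpoch_self_ge[OF assms(1,2)] qpoch_self_pos[OF assms(1,2), of n]
    by (intro mult_mono) auto
  then show "0 \<le> Phi_term x y q z n" "Phi_term x y q z n \<le> Phi_majorant q n"
    unfolding Phi_term_def
    using majorized_quotient[of q "z ^ n" "qpoch z q n"] assms
      qpoch_bounds[of z q n] power_le_one[of z n] by auto
qed


lemma summable_Phi_term:
  fixes x y q z :: real
  assumes "0 \<le> q" "q < 1" "0 \<le> z" "z \<le> 1" "0 \<le> x" "0 \<le> y"
  shows "summable (Phi_term x y q z)"
  by (rule summable_comparison_test[OF _ summable_Phi_majorant[OF assms(1,2)]])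
    (use Phi_term_bounds[OF assms] in auto)

lemma Phi_bounds:
  fixes x y q z :: real
  assumes "0 \<le> q" "q < 1" "0 \<le> z" "z \<le> 1" "0 \<le> x" "0 \<le> y"
  shows "0 \<le> Phi x y q z" "Phi x y q z \<le> (\<Sum>n. Phi_majorant q n)"
  unfolding Phi_def using Phi_term_bounds[OF assms] summable_Phi_term[OF assms]
    summable_Phi_majorant[OF assms(1,2)] by (auto intro!: suminf_nonneg suminf_le)

lemma Phi_at_1: "Phi x y q 1 = 1"
proof -
  have "Phi_term x y q 1 = (\<lambda>n. if n = 0 then 1 else 0)"
  proof
    show "Phi_term x y q 1 n = (if n = 0 then 1 else 0)" for n
      by (cases n) (simp_all add: Phi_term_def qpoch_Suc_shift)
  qed
  then show ?thesis
    unfolding Phi_def using sums_single[of 0 "\<lambda>_. 1::real"] by (simp add: sums_iff)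
qed

lemma Phi_at_base:
  fixes x y q :: real
  assumes "q = x * y" "0 < x" "0 < y" "q < 1"
  shows "Phi x y q q = (1 + x) * (1 + y) * g3 (- x) q"
proof -
  have q0: "0 < q" using assms by simp
  have "inverse (- x) * q = - y" using assms by (simp add: field_simps)
  then have g3_term: "q ^ (n * (n + 1)) / (qpoch (- x) q (n + 1) * qpoch (inverse (- x) * q) q (n + 1))
        = Phi_term x y q q n / ((1 + x) * (1 + y))" for n
    using qpoch_self_pos[of q n] qpoch_minus_ge_one[of "x * q" q n] qpoch_minus_ge_one[of "y * q" q n]
      assms q0
    by (simp add: Phi_term_def qpoch_Suc_shift power_add field_simps mult_ac)
  have summable: "summable (Phi_term x y q q)"
    using summable_Phi_term[of q q x y] q0 assms by simp
  have "g3 (- x) q = Phi x y q q / ((1 + x) * (1 + y))"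
    unfolding g3_def g3_term Phi_def by (rule suminf_divide[OF summable])
  then show ?thesis
    using assms by simp
qed

definition Phi_telescope :: "real \<Rightarrow> real \<Rightarrow> real \<Rightarrow> real \<Rightarrow> nat \<Rightarrow> real" where
  "Phi_telescope x y q z n = (if n = 0 then 0 else
     q ^ (n * n) * z ^ Suc n * qpoch (q * z) q (n - 1) /
       (qpoch q q (n - 1) * (qpoch (- (x * z)) q n * qpoch (- (y * z)) q n)))"

lemma Phi_telescope_Suc:
  "Phi_telescope x y q z (Suc n) = q ^ (Suc n * Suc n) * z ^ Suc (Suc n) * qpoch (q * z) q n /
     (qpoch q q n * (qpoch (- (x * z)) q (Suc n) * qpoch (- (y * z)) q (Suc n)))"
  by (simp add: Phi_telescope_def)

lemma Phi_telescope_bounds: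
  fixes x y q z :: real
  assumes "0 \<le> q" "q < 1" "0 \<le> z" "z \<le> 1" "0 \<le> x" "0 \<le> y"
  shows "0 \<le> Phi_telescope x y q z n" "Phi_telescope x y q z n \<le> Phi_majorant q n"
proof -
  have "0 \<le> Phi_telescope x y q z n \<and> Phi_telescope x y q z n \<le> Phi_majorant q n"
  proof (cases n)
    case (Suc m)
    have "1 \<le> qpoch (- (x * z)) q n * qpoch (- (y * z)) q n"
      using assms by (intro qpoch_minus_mult_ge_one) auto
    then have "(1 - q) ^ m * 1 \<le> qpoch q q m * (qpoch (- (x * z)) q n * qpoch (- (y * z)) q n)"
      using qpoch_self_ge[OF assms(1,2)] qpoch_self_pos[OF assms(1,2), of m]
      by (intro mult_mono) auto
    moreover have "(1 - q) ^ n \<le> (1 - q) ^ m"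
      using assms Suc by (simp add: power_decreasing)
    ultimately have den: "(1 - q) ^ n \<le> qpoch q q m * (qpoch (- (x * z)) q n * qpoch (- (y * z)) q n)"
      by linarith
    have "n \<noteq> 0" "n - 1 = m" using Suc by auto
    then show ?thesis
      unfolding Phi_telescope_def if_not_P[OF \<open>n \<noteq> 0\<close>] \<open>n - 1 = m\<close>
      using majorized_quotient[OF assms(1,2) _ _ _ _ den] assms
        qpoch_bounds[of "q * z" q m] power_le_one[of z "Suc n"] by (simp add: mult_le_one)
  qed (simp add: Phi_telescope_def Phi_majorant_def)
  then show "0 \<le> Phi_telescope x y q z n" "Phi_telescope x y q z n \<le> Phi_majorant q n"
    by auto
qed

lemma Phi_telescope_tendsto_0:
  fixes x y q z :: real
  assumes "0 \<le> q" "q < 1" "0 \<le> z" "z \<le> 1" "0 \<le> x" "0 \<le> y"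
  shows "Phi_telescope x y q z \<longlonglongrightarrow> 0"
  by (rule tendsto_sandwich[of "\<lambda>_. 0" _ _ "Phi_majorant q"])
    (use Phi_telescope_bounds[OF assms] summable_LIMSEQ_zero[OF summable_Phi_majorant[OF assms(1,2)]]
      in auto)

text \<open>The rational identity behind \<open>Phi_term_telescoping\<close>, where \<open>w\<close> stands for \<open>q\<^sup>m\<close>.\<close>
lemma telescoping_rational_identity:
  fixes x y z w q b0 bs :: real
  assumes q: "q = x * y" and bs: "bs = (1 + x*q*z*w) * (1 + y*q*z*w)"
    and nz: "1 - q*w \<noteq> 0" "b0 \<noteq> 0" "bs \<noteq> 0"
  shows "q*z*(1-z)/((1-q*w)*b0)
    - (1+x*z+y*z)/b0 * (q*(q*z*w)*(1-q*z*w)/((1-q*w)*bs))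
    - q*z*(1-q*z*w)/(b0*bs)
    = w^2*q^4*z^3*(1-q*z*w)/((1-q*w)*b0*bs) - q*z^2/b0"
proof -
  define D where "D = (1-q*w)*b0*bs"
  have D: "D \<noteq> 0" using nz by (simp add: D_def)
  have poly: "(1-z)*bs - (1+x*z+y*z)*q*w*(1-q*z*w) - (1-q*z*w)*(1-q*w)
      = w^2*q^3*z^2*(1-q*z*w) - z*(1-q*w)*bs"
    unfolding bs q by (simp add: algebra_simps power2_eq_square power3_eq_cube)
  have "q*z*(1-z)/((1-q*w)*b0) * D = q*z*(1-z)*bs"
    and "(1+x*z+y*z)/b0 * (q*(q*z*w)*(1-q*z*w)/((1-q*w)*bs)) * D
      = (1+x*z+y*z)*(q*(q*z*w)*(1-q*z*w))"
    and "q*z*(1-q*z*w)/(b0*bs) * D = q*z*(1-q*z*w)*(1-q*w)"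
    using nz by (simp_all add: D_def field_simps)
  then have "(q*z*(1-z)/((1-q*w)*b0) - (1+x*z+y*z)/b0 * (q*(q*z*w)*(1-q*z*w)/((1-q*w)*bs))
      - q*z*(1-q*z*w)/(b0*bs)) * D
      = q*z*((1-z)*bs - (1+x*z+y*z)*q*w*(1-q*z*w) - (1-q*z*w)*(1-q*w))"
    by (simp only: left_diff_distrib) (simp add: algebra_simps)
  also have "\<dots> = w^2*q^4*z^3*(1-q*z*w) - q*z^2*(1-q*w)*bs"
    unfolding poly by (simp add: algebra_simps power2_eq_square power3_eq_cube power4_eq_xxxx)
  also have "\<dots> = w^2*q^4*z^3*(1-q*z*w)/((1-q*w)*b0*bs) * D - q*z^2/b0 * D"
    using nz by (simp add: D_def)
  also have "\<dots> = (w^2*q^4*z^3*(1-q*z*w)/((1-q*w)*b0*bs) - q*z^2/b0) * D"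
    by (simp only: left_diff_distrib)
  finally show ?thesis using D by simp
qed

lemma Phi_telescoping_common_factor:
  fixes x y q z :: real and m :: nat
  assumes pos: "0 < x" "0 < y" "0 < q" "q < 1" "0 \<le> z" "z \<le> 1"
  defines "w \<equiv> q ^ m" and "b0 \<equiv> (1+x*z)*(1+y*z)" and "bs \<equiv> (1+x*q*z*q^m)*(1+y*q*z*q^m)"
    and "bq \<equiv> (1+x*(q*z))*(1+y*(q*z))"
  obtains T where "Phi_term x y q z (Suc m) = T * (q*z*(1-z)/((1-q*w)*b0))"
    and "Phi_term x y q (q*z) (Suc m) = T * (q*(q*z*w)*(1-q*z*w)/((1-q*w)*bs))"
    and "q*z*(1-q*z)/(b0*bq) * Phi_term x y q (q*(q*z)) m = T * (q*z*(1-q*z*w)/(b0*bs))"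
    and "Phi_telescope x y q z (Suc (Suc m)) = T * (w^2*q^4*z^3*(1-q*z*w)/((1-q*w)*b0*bs))"
    and "Phi_telescope x y q z (Suc m) = T * (q*z^2/b0)"
proof -
  define kk where "kk = qpoch (q * z) q m"
  define dd where "dd = qpoch q q m"
  define bb where "bb = qpoch (- (x * (q * z))) q m * qpoch (- (y * (q * z))) q m"
  have w: "0 < w" "w \<le> 1" using pos by (auto simp: w_def power_le_one)
  have "q * w < 1" "q * z < 1"
    using w pos mult_left_le[of w q] mult_left_le[of z q] by linarith+
  moreover have "0 < dd" "1 \<le> bb"
    using qpoch_self_pos[of q m] pos unfolding dd_def bb_def
    by (auto intro!: qpoch_minus_mult_ge_one)
  moreover have "0 < b0" "0 < bs" "0 < bq"
    using pos w by (auto simp: b0_def bs_def bq_def intro!: mult_pos_pos add_pos_nonneg)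
  ultimately have nz: "dd \<noteq> 0" "bb \<noteq> 0" "b0 \<noteq> 0" "bs \<noteq> 0" "bq \<noteq> 0" "1 - q*w \<noteq> 0"
    "1 - q*z \<noteq> 0" by auto
  have N0: "qpoch z q (Suc m) = (1 - z) * kk"
    by (simp add: kk_def qpoch_Suc_shift mult.commute)
  have N1: "qpoch (q*z) q (Suc m) = kk * (1 - q*z*w)"
    by (simp add: kk_def w_def qpoch_Suc mult.assoc)
  then have "(1 - q*z) * qpoch (q*(q*z)) q m = kk * (1 - q*z*w)"
    using qpoch_Suc_shift[of "q*z" q m] by (simp add: mult_ac)
  then have N2: "qpoch (q*(q*z)) q m = kk * (1 - q*z*w) / (1 - q*z)"
    using nz by (simp add: field_simps)
  have D: "qpoch q q (Suc m) = dd * (1 - q*w)"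
    by (simp add: dd_def w_def qpoch_Suc)
  have B0: "qpoch (- (x*z)) q (Suc m) * qpoch (- (y*z)) q (Suc m) = b0 * bb"
    by (simp add: b0_def bb_def qpoch_minus_pair_Suc_shift)
  have B1: "qpoch (- (x*(q*z))) q (Suc m) * qpoch (- (y*(q*z))) q (Suc m) = bb * bs"
    by (simp add: bb_def bs_def qpoch_Suc mult_ac)
  then have B2: "qpoch (- (x*(q*(q*z)))) q m * qpoch (- (y*(q*(q*z)))) q m = bb * bs / bq"
    using nz qpoch_minus_pair_Suc_shift[of x "q*z" q m y] by (simp add: bq_def field_simps)
  have B3: "qpoch (- (x*z)) q (Suc (Suc m)) * qpoch (- (y*z)) q (Suc (Suc m)) = b0 * bb * bs"
    using B1 by (simp add: b0_def qpoch_minus_pair_Suc_shift[of x z q "Suc m"])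
  have P: "q ^ (Suc m * Suc m) = q ^ (m * m) * w^2 * q"
    "q ^ (Suc (Suc m) * Suc (Suc m)) = q ^ (m * m) * w^4 * q^4"
    by (simp_all add: w_def power_add power_mult_distrib power2_eq_square power4_eq_xxxx
        algebra_simps flip: power_mult)
  show thesis
    by (rule that[of "q ^ (m * m) * z ^ m * kk * w^2 / (dd * bb)"];
        unfold Phi_term_def Phi_telescope_Suc N0 N1 N2 D B0 B1 B2 B3 P, use nz in
        \<open>simp add: kk_def dd_def bb_def w_def power_mult_distrib field_simps power2_eq_square
          power3_eq_cube power4_eq_xxxx\<close>)
qed

lemma Phi_term_telescoping:
  fixes x y q z :: real
  assumes q: "q = x * y" and pos: "0 < x" "0 < y" "q < 1" "0 \<le> z" "z \<le> 1"
  shows "Phi_term x y q z (Suc m) - (1+x*z+y*z)/((1+x*z)*(1+y*z)) * Phi_term x y q (q*z) (Suc m)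
     - q*z*(1-q*z)/((1+x*z)*(1+y*z)*((1+x*(q*z))*(1+y*(q*z)))) * Phi_term x y q (q*(q*z)) m
     = Phi_telescope x y q z (Suc (Suc m)) - Phi_telescope x y q z (Suc m)"
proof -
  define w b0 bs bq where "w = q ^ m" and "b0 = (1+x*z)*(1+y*z)"
    and "bs = (1+x*q*z*w)*(1+y*q*z*w)" and "bq = (1+x*(q*z))*(1+y*(q*z))"
  have "0 < q" using q pos by simp
  obtain T where terms: "Phi_term x y q z (Suc m) = T * (q*z*(1-z)/((1-q*w)*b0))"
    "Phi_term x y q (q*z) (Suc m) = T * (q*(q*z*w)*(1-q*z*w)/((1-q*w)*bs))"
    "q*z*(1-q*z)/(b0*bq) * Phi_term x y q (q*(q*z)) m = T * (q*z*(1-q*z*w)/(b0*bs))"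
    "Phi_telescope x y q z (Suc (Suc m)) = T * (w^2*q^4*z^3*(1-q*z*w)/((1-q*w)*b0*bs))"
    "Phi_telescope x y q z (Suc m) = T * (q*z^2/b0)"
    using Phi_telescoping_common_factor[OF pos(1,2) \<open>0 < q\<close> pos(3-5)]
    unfolding w_def b0_def bs_def bq_def by blast
  have "q * w \<le> q" using pos \<open>0 < q\<close> by (simp add: w_def mult_left_le power_le_one)
  then have "q * w < 1" using pos by linarith
  moreover have "0 < b0" "0 < bs"
    using pos \<open>0 < q\<close> by (auto simp: w_def b0_def bs_def intro!: mult_pos_pos add_pos_nonneg)
  ultimately have nz: "1 - q*w \<noteq> 0" "b0 \<noteq> 0" "bs \<noteq> 0" by auto
  have "Phi_term x y q z (Suc m) - (1+x*z+y*z)/b0 * Phi_term x y q (q*z) (Suc m)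
      - q*z*(1-q*z)/(b0*bq) * Phi_term x y q (q*(q*z)) m
      = T * (w^2*q^4*z^3*(1-q*z*w)/((1-q*w)*b0*bs) - q*z^2/b0)"
    unfolding terms(1-3) telescoping_rational_identity[OF q bs_def nz, symmetric]
    by (simp add: algebra_simps)
  also have "\<dots> = Phi_telescope x y q z (Suc (Suc m)) - Phi_telescope x y q z (Suc m)"
    unfolding terms(4,5) by (simp add: algebra_simps)
  finally show ?thesis unfolding b0_def bq_def .
qed

lemma Phi_q_difference:
  fixes x y q z :: real
  assumes q: "q = x * y" and pos: "0 < x" "0 < y" "q < 1" "0 \<le> z" "z \<le> 1"
  shows "Phi x y q z = (1+x*z+y*z)/((1+x*z)*(1+y*z)) * Phi x y q (q*z)
     + q*z*(1-q*z)/((1+x*z)*(1+y*z)*((1+x*(q*z))*(1+y*(q*z)))) * Phi x y q (q*(q*z))"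
proof -
  define c1 where "c1 = (1+x*z+y*z)/((1+x*z)*(1+y*z))"
  define c2 where "c2 = q*z*(1-q*z)/((1+x*z)*(1+y*z)*((1+x*(q*z))*(1+y*(q*z))))"
  have q0: "0 < q" using q pos by simp
  have "0 \<le> q*z" "q*z \<le> 1" "0 \<le> q*(q*z)" "q*(q*z) \<le> 1"
    using pos q0 by (auto simp: mult_le_one)
  then have sums: "Phi_term x y q z sums Phi x y q z" "Phi_term x y q (q*z) sums Phi x y q (q*z)"
    "Phi_term x y q (q*(q*z)) sums Phi x y q (q*(q*z))"
    unfolding Phi_def using summable_Phi_term pos q0 by auto
  define h where "h n = (if n = 0 then 0 else c2 * Phi_term x y q (q*(q*z)) (n - 1))" for n
  have "h sums (c2 * Phi x y q (q*(q*z)))"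
    using sums_Suc_iff[of h] sums_mult[OF sums(3), of c2] by (simp add: h_def)
  then have diff_sums: "(\<lambda>n. Phi_term x y q z n - c1 * Phi_term x y q (q*z) n - h n) sums
       (Phi x y q z - c1 * Phi x y q (q*z) - c2 * Phi x y q (q*(q*z)))"
    by (intro sums_diff sums_mult sums(1,2))
  have "Phi_term x y q z n - c1 * Phi_term x y q (q*z) n - h n
      = Phi_telescope x y q z (Suc n) - Phi_telescope x y q z n" for n
  proof (cases n)
    case 0
    have "0 < (1+x*z)*(1+y*z)" using pos by (intro mult_pos_pos add_pos_nonneg) auto
    then have "1 - c1 = q*z^2/((1+x*z)*(1+y*z))"
      unfolding c1_def q by (simp add: field_simps power2_eq_square)
    then show ?thesis
      using 0 by (simp add: Phi_term_def h_def Phi_telescope_def qpoch_Suc power2_eq_square)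
  next
    case (Suc m)
    then show ?thesis
      unfolding h_def c1_def c2_def using Phi_term_telescoping[OF q pos, of m] by simp
  qed
  moreover have "(\<lambda>n. Phi_telescope x y q z (Suc n) - Phi_telescope x y q z n) sums 0"
    using telescope_sums[OF Phi_telescope_tendsto_0] pos q0 by (simp add: Phi_telescope_def)
  ultimately have "(\<lambda>n. Phi_term x y q z n - c1 * Phi_term x y q (q*z) n - h n) sums 0"
    by simp
  then have "Phi x y q z - c1 * Phi x y q (q*z) - c2 * Phi x y q (q*(q*z)) = 0"
    by (rule sums_unique2[OF diff_sums])
  then show ?thesis unfolding c1_def c2_def by simp
qed

section \<open>Bounded solutions of a contracting three-term recurrence\<close>

lemma bounded_recurrence_solutions_Casoratian_zero:
  fixes A Y \<alpha> \<gamma> :: "nat \<Rightarrow> real" and B c :: real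
  assumes A: "\<And>k. A k = \<alpha> k * A (Suc k) + \<gamma> k * A (Suc (Suc k))"
    and Y: "\<And>k. Y k = \<alpha> k * Y (Suc k) + \<gamma> k * Y (Suc (Suc k))"
    and \<gamma>: "\<And>k. \<bar>\<gamma> k\<bar> \<le> c" "c < 1"
    and bounded: "\<And>k. \<bar>A k\<bar> \<le> B" "\<And>k. \<bar>Y k\<bar> \<le> B"
  shows "A 0 * Y 1 = A 1 * Y 0"
proof -
  define C where "C k = A k * Y (Suc k) - A (Suc k) * Y k" for k
  have C_step: "C k = - \<gamma> k * C (Suc k)" for k
    unfolding C_def using A[of k] Y[of k] by (simp add: algebra_simps)
  have "0 \<le> c" using \<gamma>(1)[of 0] by simp
  have "0 \<le> B" using bounded(1)[of 0] by simp
  have C_bound: "\<bar>C k\<bar> \<le> 2 * B\<^sup>2" for k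
    unfolding C_def power2_eq_square
    using mult_mono[OF bounded(1) bounded(2), of k "Suc k"] mult_mono[OF bounded(1) bounded(2), of "Suc k" k]
      abs_triangle_ineq4[of "A k * Y (Suc k)" "A (Suc k) * Y k"] \<open>0 \<le> B\<close>
    by (simp add: abs_mult)
  have "\<bar>C 0\<bar> \<le> c ^ n * \<bar>C n\<bar>" for n
  proof (induction n)
    case (Suc n)
    have "\<bar>C n\<bar> = \<bar>\<gamma> n\<bar> * \<bar>C (Suc n)\<bar>"
      using C_step[of n] by (simp add: abs_mult)
    also have "\<dots> \<le> c * \<bar>C (Suc n)\<bar>"
      using \<gamma>(1)[of n] by (rule mult_right_mono) simp
    finally have "c ^ n * \<bar>C n\<bar> \<le> c ^ n * (c * \<bar>C (Suc n)\<bar>)"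
      using \<open>0 \<le> c\<close> by (simp add: mult_left_mono)
    then show ?case using Suc.IH by (simp add: mult_ac)
  qed simp
  moreover have "c ^ n * \<bar>C n\<bar> \<le> c ^ n * (2 * B\<^sup>2)" for n
    using C_bound \<open>0 \<le> c\<close> by (simp add: mult_left_mono)
  ultimately have "\<bar>C 0\<bar> \<le> c ^ n * (2 * B\<^sup>2)" for n
    by (rule order_trans)
  moreover have "(\<lambda>n. c ^ n * (2 * B\<^sup>2)) \<longlonglongrightarrow> 0 * (2 * B\<^sup>2)"
    using \<gamma>(2) \<open>0 \<le> c\<close> by (intro tendsto_mult tendsto_const LIMSEQ_power_zero) simp
  ultimately have "\<bar>C 0\<bar> \<le> 0 * (2 * B\<^sup>2)"
    by (intro LIMSEQ_le_const) auto
  then show ?thesis by (simp add: C_def)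
qed

section \<open>Patterns of independent events\<close>

locale indep_event_seq = prob_space M for M :: "'a measure" +
  fixes E :: "nat \<Rightarrow> 'a set"
  assumes indep: "indep_events E {1..}"
begin

definition events_from :: "nat \<Rightarrow> 'a set set" where
  "events_from m = sigma_sets (space M) (E ` {m..})"

definition event_or_compl :: "bool \<Rightarrow> nat \<Rightarrow> 'a set" where
  "event_or_compl b i = (if b then E i else space M - E i)"

definition pattern_Int :: "(bool \<times> nat) list \<Rightarrow> 'a set \<Rightarrow> 'a set" where
  "pattern_Int xs Y = foldr (\<lambda>(b, i) S. event_or_compl b i \<inter> S) xs Y"

definition pattern_prob :: "(bool \<times> nat) list \<Rightarrow> real" where
  "pattern_prob xs = (\<Prod>(b, i) \<leftarrow> xs. prob (event_or_compl b i))"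

lemma pattern_prob_simps [simp]:
  "pattern_prob [] = 1"
  "pattern_prob ((b, i) # xs) = prob (event_or_compl b i) * pattern_prob xs"
  by (simp_all add: pattern_prob_def)

lemma pattern_prob_bounds: "0 \<le> pattern_prob xs" "pattern_prob xs \<le> 1"
proof (induction xs)
  case (Cons x xs)
  obtain b i where "x = (b, i)" by fastforce
  with Cons show "0 \<le> pattern_prob (x # xs)" "pattern_prob (x # xs) \<le> 1"
    by (auto intro: mult_le_one)
qed simp_all

lemma pattern_prob_le_member:
  "(b, i) \<in> set xs \<Longrightarrow> pattern_prob xs \<le> prob (event_or_compl b i)"
proof (induction xs)
  case (Cons x xs)
  obtain b' i' where x: "x = (b', i')" by fastforce
  show ?case
  proof (cases "x = (b, i)")
    case True
    then show ?thesis
      using pattern_prob_bounds[of xs] by (auto intro: mult_left_le)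
  next
    case False
    then have "pattern_prob xs \<le> prob (event_or_compl b i)" using Cons by simp
    moreover have "prob (event_or_compl b' i') * pattern_prob xs \<le> pattern_prob xs"
      using pattern_prob_bounds[of xs] by (simp add: mult_left_le_one_le)
    ultimately show ?thesis
      using x by simp
  qed
qed simp

lemma pattern_Int_simps [simp]:
  "pattern_Int [] Y = Y"
  "pattern_Int ((b, i) # xs) Y = event_or_compl b i \<inter> pattern_Int xs Y"
  by (simp_all add: pattern_Int_def)

lemma E_in_events: "1 \<le> j \<Longrightarrow> E j \<in> events"
  using indep unfolding indep_events_def by auto

lemma sigma_algebra_events_from:
  assumes "1 \<le> m"
  shows "sigma_algebra (space M) (events_from m)"
proof -
  have "E j \<subseteq> space M" if "j \<in> {m..}" for j
    using assms that E_in_events[of j] sets.sets_into_space by simp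
  then have "E ` {m..} \<subseteq> Pow (space M)" by auto
  then show ?thesis unfolding events_from_def by (rule sigma_algebra_sigma_sets)
qed

lemma events_from_subset_events: "1 \<le> m \<Longrightarrow> events_from m \<subseteq> events"
  unfolding events_from_def by (rule sets.sigma_sets_subset) (use E_in_events in auto)

lemma events_from_antimono:
  assumes "m \<le> m'" "X \<in> events_from m'"
  shows "X \<in> events_from m"
proof -
  have "E ` {m'..} \<subseteq> E ` {m..}" using assms(1) by auto
  then show ?thesis
    using sigma_sets_mono' assms(2) unfolding events_from_def by blast
qed

lemma space_in_events_from: "space M \<in> events_from m"
  unfolding events_from_def by (rule sigma_sets_top)

lemma event_or_compl_in_events_from: "m \<le> j \<Longrightarrow> event_or_compl b j \<in> events_from m"
  unfolding events_from_def event_or_compl_def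
  by (auto intro: sigma_sets.Basic sigma_sets.Compl)

lemma event_or_compl_in_events: "1 \<le> j \<Longrightarrow> event_or_compl b j \<in> events"
  unfolding event_or_compl_def using E_in_events by auto

lemma prob_event_or_compl:
  "1 \<le> j \<Longrightarrow> prob (event_or_compl b j) = (if b then prob (E j) else 1 - prob (E j))"
  unfolding event_or_compl_def by (simp add: prob_compl E_in_events)

lemma prob_event_or_compl_Int:
  assumes "1 \<le> i" "Y \<in> events_from (Suc i)"
  shows "prob (event_or_compl b i \<inter> Y) = prob (event_or_compl b i) * prob Y"
proof -
  define I where "I c = (if c then {i} else {Suc i..})" for c
  have "indep_sets (\<lambda>j. {E j}) {1..}"
    using indep unfolding indep_events_def_alt .
  then have "indep_sets (\<lambda>j. {E j}) (\<Union>c. I c)"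
    by (rule indep_sets_mono_index[rotated]) (use assms(1) in \<open>auto simp: I_def\<close>)
  then have indep2: "indep_sets (\<lambda>c. sigma_sets (space M) (\<Union>j\<in>I c. {E j})) UNIV"
    by (rule indep_sets_collect_sigma) (auto simp: I_def Int_stable_def disjoint_family_on_def)
  have "event_or_compl b i \<in> sigma_sets (space M) (\<Union>j\<in>I True. {E j})"
    unfolding event_or_compl_def I_def by (auto intro: sigma_sets.Basic sigma_sets.Compl)
  moreover have "(\<Union>j\<in>I False. {E j}) = E ` {Suc i..}"
    by (auto simp: I_def)
  then have "Y \<in> sigma_sets (space M) (\<Union>j\<in>I False. {E j})"
    using assms(2) unfolding events_from_def by simp
  ultimately have "prob (\<Inter>c. if c then event_or_compl b i else Y)
      = (\<Prod>c\<in>UNIV. prob (if c then event_or_compl b i else Y))"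
    by (intro indep_setsD[OF indep2]) auto
  then show ?thesis by (simp add: UNIV_bool Int_commute)
qed

lemma pattern_Int_in_events_from:
  assumes "1 \<le> m" "Y \<in> events_from m" "\<forall>(b, i) \<in> set xs. m \<le> i"
  shows "pattern_Int xs Y \<in> events_from m"
proof -
  interpret S: sigma_algebra "space M" "events_from m"
    using assms(1) by (rule sigma_algebra_events_from)
  show ?thesis
    using assms(2,3) by (induction xs) (auto intro!: S.Int event_or_compl_in_events_from)
qed

lemma prob_pattern_Int:
  assumes "sorted_wrt (\<lambda>u v. snd u < snd v) xs" "\<forall>(b, i) \<in> set xs. 1 \<le> i \<and> i < m"
    and "Y \<in> events_from m"
  shows "prob (pattern_Int xs Y) = pattern_prob xs * prob Y"
  using assms
proof (induction xs)
  case (Cons bi xs)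
  obtain b i where bi: "bi = (b, i)" by fastforce
  have "Y \<in> events_from (Suc i)"
    using Cons.prems bi events_from_antimono[of "Suc i" m Y] by auto
  then have "pattern_Int xs Y \<in> events_from (Suc i)"
    using Cons.prems bi by (intro pattern_Int_in_events_from) auto
  moreover have "prob (pattern_Int xs Y) = pattern_prob xs * prob Y"
    using Cons.IH Cons.prems by simp
  moreover have "1 \<le> i" using Cons.prems bi by simp
  ultimately show ?case
    using bi by (simp add: prob_event_or_compl_Int mult.assoc)
qed simp

end

section \<open>Block probabilities\<close>

text \<open>With \<open>u = x Z\<close>, \<open>v = y Z\<close>, \<open>w = Q Z\<close> (and \<open>Q Z\<close> in place of \<open>Z\<close> for the primed
  variables) these identities turn \<open>\<alpha>\<close> and \<open>\<gamma>\<close> into the coefficients of \<open>Phi_q_difference\<close>.\<close>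
lemma recurrence_coefficient_first:
  fixes u v w :: real
  assumes "1 + u \<noteq> 0" "1 + v \<noteq> 0" "1 + w \<noteq> 0"
  shows "(1/(1+v) * (1/(1+w)) + 1/(1+u) * (v/(1+v)) * (1/(1+w))) * (1+w) = (1+u+v)/((1+u)*(1+v))"
  using assms by (simp add: divide_simps)

lemma recurrence_coefficient_second:
  fixes u v w u' v' w' :: real
  assumes "1 + u \<noteq> 0" "1 + v \<noteq> 0" "1 + w \<noteq> 0" "1 + u' \<noteq> 0" "1 + v' \<noteq> 0" "1 + w' \<noteq> 0"
    and "v * u' = w * w"
  shows "(1/(1+u) * (1/(1+v)) * (w/(1+w)) * (1/(1+u')) * (1/(1+v')) * (1/(1+w'))
     - 1/(1+u) * (v/(1+v)) * (1/(1+w)) * (u'/(1+u')) * (1/(1+v')) * (1/(1+w')))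
     * ((1+w)*(1+w')) = w*(1-w)/((1+u)*(1+v)*((1+u')*(1+v')))"
  using assms by (simp add: divide_simps) (simp add: algebra_simps)

locale block_events = indep_event_seq +
  fixes q :: real and d r :: nat
  assumes q: "0 < q" "q < 1" and r: "1 \<le> r" "2 * r < d"
    and prob_E: "\<And>j. 1 \<le> j \<Longrightarrow> prob (E j) = q ^ j / (1 + q ^ j)"
begin

definition blocks_from :: "nat \<Rightarrow> 'a set" where
  "blocks_from k = space M \<inter> (\<Inter>n\<in>{k..}. blk M d r E n)"

definition u :: "nat \<Rightarrow> real" where
  "u k = prob (blocks_from k)"

definition \<alpha> :: "nat \<Rightarrow> real" where
  "\<alpha> k = pattern_prob [(False, k*d + (d-r)), (False, Suc k * d)]
     + pattern_prob [(False, k*d + r), (True, k*d + (d-r)), (False, Suc k * d)]"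

definition \<gamma> :: "nat \<Rightarrow> real" where
  "\<gamma> k = pattern_prob [(False, k*d + r), (False, k*d + (d-r)), (True, Suc k * d),
       (False, Suc k * d + r), (False, Suc k * d + (d-r)), (False, Suc (Suc k) * d)]
     - pattern_prob [(False, k*d + r), (True, k*d + (d-r)), (False, Suc k * d),
       (True, Suc k * d + r), (False, Suc k * d + (d-r)), (False, Suc (Suc k) * d)]"

lemma prob_event_or_compl_eq:
  "1 \<le> j \<Longrightarrow> prob (event_or_compl b j) = (if b then q ^ j else 1) / (1 + q ^ j)"
proof -
  assume "1 \<le> j"
  moreover have "0 < 1 + q ^ j" using q by (simp add: add_pos_nonneg)
  ultimately show ?thesis
    by (cases b) (simp_all add: prob_event_or_compl prob_E field_simps)
qed

lemma blk_eq: "blk M d r E n =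
   (pattern_Int [(True, n*d+r), (False, n*d+(d-r)), (False, Suc n*d)] (space M)
      \<union> event_or_compl False (n*d+r))
 \<inter> (pattern_Int [(True, n*d+(d-r)), (False, Suc n*d), (False, Suc n*d+r)] (space M)
      \<union> event_or_compl False (n*d+(d-r)))
 \<inter> (pattern_Int [(True, Suc n*d), (False, Suc n*d+r), (False, Suc n*d+(d-r)),
       (False, Suc (Suc n)*d)] (space M)
      \<union> event_or_compl False (Suc n*d))"
  unfolding blk_def Ev_def Fv_def by (auto simp: event_or_compl_def)

lemma blocks_from_Suc: "blocks_from k = space M \<inter> blk M d r E k \<inter> blocks_from (Suc k)"
proof -
  have "{k..} = insert k {Suc k..}" by auto
  then show ?thesis unfolding blocks_from_def by auto
qed

lemma blocks_from_in_events_from: "blocks_from k \<in> events_from (k*d + r)"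
proof -
  interpret S: sigma_algebra "space M" "events_from (k*d + r)"
    using r by (intro sigma_algebra_events_from) simp
  have "blk M d r E n \<in> events_from (k*d + r)" if "k \<le> n" for n
  proof -
    have "k*d \<le> n*d" using that by simp
    then have "k*d + r \<le> n*d + r" "k*d + r \<le> n*d + (d-r)" "k*d + r \<le> n*d + d"
      using r by linarith+
    then show ?thesis
      unfolding blk_eq using r space_in_events_from mult_Suc
      by (intro S.Int S.Un pattern_Int_in_events_from event_or_compl_in_events_from) auto
  qed
  then show ?thesis
    unfolding blocks_from_def using space_in_events_from by (intro S.Int S.countable_INT') auto
qed

lemma blocks_from_subset: "blocks_from k \<subseteq> space M"
  by (simp add: blocks_from_def)

lemma blocks_from_decomp:
  fixes k :: nat
  defines "b \<equiv> k*d + r" and "c \<equiv> k*d + (d-r)" and "a \<equiv> Suc k * d"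
    and "b' \<equiv> Suc k * d + r" and "c' \<equiv> Suc k * d + (d-r)" and "a' \<equiv> Suc (Suc k) * d"
  shows "blocks_from k = pattern_Int [(False, c), (False, a)] (blocks_from (Suc k))
      \<union> pattern_Int [(False, b), (True, c), (False, a)] (event_or_compl False b' \<inter> blocks_from (Suc k))
      \<union> pattern_Int [(False, b), (False, c), (True, a), (False, b'), (False, c'), (False, a')]
          (blocks_from (Suc (Suc k)))"
  using blocks_from_subset[of "Suc (Suc k)"]
  unfolding blocks_from_Suc[of k] blocks_from_Suc[of "Suc k"] blk_eq assms
  by (auto simp: event_or_compl_def)

lemma blocks_from_in_events_from_le: "m \<le> k*d + r \<Longrightarrow> blocks_from k \<in> events_from m"
  using events_from_antimono blocks_from_in_events_from by blast

lemma blocks_from_in_events: "blocks_from k \<in> events"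
  using blocks_from_in_events_from_le[of 1] events_from_subset_events[of 1] r by auto

lemma prob_pattern_Int_blocks_from:
  assumes "sorted_wrt (\<lambda>u v. snd u < snd v) xs" "\<forall>(b, i) \<in> set xs. 1 \<le> i \<and> i < k*d + r"
  shows "prob (pattern_Int xs (blocks_from k)) = pattern_prob xs * u k"
  unfolding u_def using assms blocks_from_in_events_from by (rule prob_pattern_Int)

lemma prob_none_Int_blocks_from:
  "prob (pattern_Int [(False, k*d + r), (False, k*d + (d-r)), (False, Suc k * d)] (blocks_from k))
    = pattern_prob [(False, k*d + r), (False, k*d + (d-r)), (False, Suc k * d)] * u (Suc k)"
proof -
  have "pattern_Int [(False, k*d + r), (False, k*d + (d-r)), (False, Suc k * d)] (blocks_from k)
    = pattern_Int [(False, k*d + r), (False, k*d + (d-r)), (False, Suc k * d)] (blocks_from (Suc k))"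
    using blocks_from_subset[of "Suc k"] unfolding blocks_from_Suc[of k] blk_eq
    by (auto simp: event_or_compl_def)
  also have "prob \<dots> = pattern_prob [(False, k*d + r), (False, k*d + (d-r)), (False, Suc k * d)] * u (Suc k)"
    using r by (intro prob_pattern_Int_blocks_from) auto
  finally show ?thesis .
qed

lemma prob_compl_Int_blocks_from:
  "prob (event_or_compl False (k*d + r) \<inter> blocks_from k)
    = u k - pattern_prob [(True, k*d + r), (False, k*d + (d-r)), (False, Suc k * d)] * u (Suc k)"
proof -
  have "event_or_compl False (k*d + r) \<inter> blocks_from k = blocks_from k - E (k*d + r)"
    using blocks_from_subset[of k] by (auto simp: event_or_compl_def)
  then have "prob (event_or_compl False (k*d + r) \<inter> blocks_from k)
      = u k - prob (event_or_compl True (k*d + r) \<inter> blocks_from k)"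
    using finite_measure_Diff'[OF blocks_from_in_events E_in_events] r
    by (simp add: u_def event_or_compl_def Int_commute)
  moreover have "event_or_compl True (k*d + r) \<inter> blocks_from k
      = pattern_Int [(True, k*d + r), (False, k*d + (d-r)), (False, Suc k * d)] (blocks_from (Suc k))"
    using blocks_from_subset[of "Suc k"] unfolding blocks_from_Suc[of k] blk_eq
    by (auto simp: event_or_compl_def)
  moreover have "prob \<dots> = pattern_prob [(True, k*d + r), (False, k*d + (d-r)), (False, Suc k * d)]
      * u (Suc k)"
    using r by (intro prob_pattern_Int_blocks_from) auto
  ultimately show ?thesis by simp
qed

lemma u_eq_pattern_sum:
  fixes k :: nat
  defines "b \<equiv> k*d + r" and "c \<equiv> k*d + (d-r)" and "a \<equiv> Suc k * d"
    and "b' \<equiv> Suc k * d + r" and "c' \<equiv> Suc k * d + (d-r)" and "a' \<equiv> Suc (Suc k) * d"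
  shows "u k = pattern_prob [(False, c), (False, a)] * u (Suc k)
      + pattern_prob [(False, b), (True, c), (False, a)]
          * (u (Suc k) - pattern_prob [(True, b'), (False, c'), (False, a')] * u (Suc (Suc k)))
      + pattern_prob [(False, b), (False, c), (True, a), (False, b'), (False, c'), (False, a')]
          * u (Suc (Suc k))"
proof -
  have idx: "1 \<le> b" "b < c" "c < a" "a < b'" "b' < c'" "c' < a'" "a' < Suc (Suc k) * d + r"
    unfolding assms using r by auto
  define P1 where "P1 = pattern_Int [(False, c), (False, a)] (blocks_from (Suc k))"
  define P2 where "P2 = pattern_Int [(False, b), (True, c), (False, a)]
    (event_or_compl False b' \<inter> blocks_from (Suc k))"
  define P3 where "P3 = pattern_Int [(False, b), (False, c), (True, a), (False, b'), (False, c'),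
    (False, a')] (blocks_from (Suc (Suc k)))"
  have "P1 \<in> events" "P2 \<in> events" "P3 \<in> events"
    unfolding P1_def P2_def P3_def using idx
    by (auto intro!: sets.Int blocks_from_in_events event_or_compl_in_events)
  moreover have "P1 \<inter> P2 = {}" "(P1 \<union> P2) \<inter> P3 = {}"
    unfolding P1_def P2_def P3_def by (auto simp: event_or_compl_def)
  ultimately have "u k = prob P1 + prob P2 + prob P3"
    unfolding u_def blocks_from_decomp[of k, folded assms] P1_def[symmetric]
      P2_def[symmetric] P3_def[symmetric]
    by (simp add: finite_measure_Union)
  moreover have "prob P1 = pattern_prob [(False, c), (False, a)] * u (Suc k)"
    "prob P3 = pattern_prob [(False, b), (False, c), (True, a), (False, b'), (False, c'),
      (False, a')] * u (Suc (Suc k))"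
    unfolding P1_def P3_def
    by (rule prob_pattern_Int_blocks_from; use idx r in \<open>auto simp: a_def a'_def\<close>)+
  moreover have "event_or_compl False b' \<inter> blocks_from (Suc k) \<in> events_from b'"
    using pattern_Int_in_events_from[of b' "blocks_from (Suc k)" "[(False, b')]"]
      blocks_from_in_events_from_le idx by (simp add: b'_def)
  then have "prob P2 = pattern_prob [(False, b), (True, c), (False, a)]
      * prob (event_or_compl False b' \<inter> blocks_from (Suc k))"
    unfolding P2_def using idx by (intro prob_pattern_Int) auto
  ultimately show ?thesis
    using prob_compl_Int_blocks_from[of "Suc k"] unfolding assms by simp
qed

lemma u_recurrence: "u k = \<alpha> k * u (Suc k) + \<gamma> k * u (Suc (Suc k))"
  using u_eq_pattern_sum[of k] unfolding \<alpha>_def \<gamma>_def by (simp add: algebra_simps)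

lemma abs_\<gamma>_le: "\<bar>\<gamma> k\<bar> \<le> 1/2"
proof -
  have half: "prob (event_or_compl True j) \<le> 1/2" if "1 \<le> j" for j
  proof -
    have "0 < 1 + q ^ j" "q ^ j \<le> 1" using q by (simp_all add: add_pos_nonneg power_le_one)
    then show ?thesis using that by (simp add: prob_event_or_compl_eq divide_simps)
  qed
  let ?P = "[(False, k*d + r), (False, k*d + (d-r)), (True, Suc k * d),
       (False, Suc k * d + r), (False, Suc k * d + (d-r)), (False, Suc (Suc k) * d)]"
  let ?P' = "[(False, k*d + r), (True, k*d + (d-r)), (False, Suc k * d),
       (True, Suc k * d + r), (False, Suc k * d + (d-r)), (False, Suc (Suc k) * d)]"
  have "pattern_prob ?P \<le> prob (event_or_compl True (Suc k * d))"
    by (rule pattern_prob_le_member) simp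
  also have "\<dots> \<le> 1/2" using r by (intro half) simp
  finally have "pattern_prob ?P \<le> 1/2" .
  have "pattern_prob ?P' \<le> prob (event_or_compl True (k*d + (d-r)))"
    by (rule pattern_prob_le_member) simp
  also have "\<dots> \<le> 1/2" using r by (intro half) simp
  finally have "pattern_prob ?P' \<le> 1/2" .
  with \<open>pattern_prob ?P \<le> 1/2\<close> show ?thesis
    unfolding \<gamma>_def using pattern_prob_bounds(1)[of ?P] pattern_prob_bounds(1)[of ?P'] by linarith
qed

lemma prob_event_or_compl_block:
  fixes k :: nat
  defines "Z \<equiv> (q^d)^k"
  shows "prob (event_or_compl b (k*d + r)) = (if b then q^r*Z else 1) / (1 + q^r*Z)"
    and "prob (event_or_compl b (k*d + (d-r))) = (if b then q^(d-r)*Z else 1) / (1 + q^(d-r)*Z)"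
    and "prob (event_or_compl b (Suc k * d)) = (if b then q^d*Z else 1) / (1 + q^d*Z)"
    and "prob (event_or_compl b (Suc k * d + r))
      = (if b then q^r*(q^d*Z) else 1) / (1 + q^r*(q^d*Z))"
    and "prob (event_or_compl b (Suc k * d + (d-r)))
      = (if b then q^(d-r)*(q^d*Z) else 1) / (1 + q^(d-r)*(q^d*Z))"
    and "prob (event_or_compl b (Suc (Suc k) * d))
      = (if b then q^d*(q^d*Z) else 1) / (1 + q^d*(q^d*Z))"
proof -
  have block: "prob (event_or_compl b (m*d + j)) = (if b then q^j * (q^d)^m else 1) / (1 + q^j * (q^d)^m)"
    if "1 \<le> m*d + j" for m j
  proof -
    have "q ^ (m*d + j) = q^j * (q^d)^m"
      by (simp add: power_add mult.commute flip: power_mult)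
    then show ?thesis using that by (simp add: prob_event_or_compl_eq)
  qed
  show "prob (event_or_compl b (k*d + r)) = (if b then q^r*Z else 1) / (1 + q^r*Z)"
    using block[of k r] r by (simp add: Z_def)
  show "prob (event_or_compl b (k*d + (d-r))) = (if b then q^(d-r)*Z else 1) / (1 + q^(d-r)*Z)"
    using block[of k "d-r"] r by (simp add: Z_def)
  show "prob (event_or_compl b (Suc k * d)) = (if b then q^d*Z else 1) / (1 + q^d*Z)"
    using block[of "Suc k" 0] r by (simp add: Z_def)
  show "prob (event_or_compl b (Suc k * d + r))
      = (if b then q^r*(q^d*Z) else 1) / (1 + q^r*(q^d*Z))"
    using block[of "Suc k" r] r by (simp add: Z_def)
  show "prob (event_or_compl b (Suc k * d + (d-r)))
      = (if b then q^(d-r)*(q^d*Z) else 1) / (1 + q^(d-r)*(q^d*Z))"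
    using block[of "Suc k" "d-r"] r by (simp add: Z_def)
  show "prob (event_or_compl b (Suc (Suc k) * d))
      = (if b then q^d*(q^d*Z) else 1) / (1 + q^d*(q^d*Z))"
    using block[of "Suc (Suc k)" 0] r by (simp add: Z_def)
qed

lemma one_plus_q_power_nonzero: "0 \<le> Z \<Longrightarrow> 1 + q^j * Z \<noteq> 0"
  using q by (smt (verit) zero_le_mult_iff zero_le_power)

lemma \<alpha>_eq:
  fixes k :: nat
  defines "Z \<equiv> (q^d)^k"
  shows "\<alpha> k * (1 + q^d * Z) = (1 + q^r*Z + q^(d-r)*Z) / ((1 + q^r*Z) * (1 + q^(d-r)*Z))"
proof -
  have expand: "\<alpha> k = 1/(1 + q^(d-r)*Z) * (1/(1 + q^d*Z))
      + 1/(1 + q^r*Z) * (q^(d-r)*Z/(1 + q^(d-r)*Z)) * (1/(1 + q^d*Z))"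
    unfolding \<alpha>_def pattern_prob_simps prob_event_or_compl_block Z_def
    by (simp only: if_True if_False mult_1_right mult.assoc power_Suc)
  show ?thesis unfolding expand
    using q by (intro recurrence_coefficient_first one_plus_q_power_nonzero) (simp_all add: Z_def)
qed

lemma power_d_eq_mult: "q^d = q^r * q^(d-r)"
  using r by (simp flip: power_add)

lemma power_d_bounds: "0 < q^d" "q^d < 1"
proof -
  have "q^d \<le> q^1" using q r by (intro power_decreasing) auto
  then show "0 < q^d" "q^d < 1" using q by simp_all
qed

lemma \<gamma>_eq:
  fixes k :: nat
  defines "Z \<equiv> (q^d)^k"
  shows "\<gamma> k * ((1 + q^d*Z) * (1 + q^d*(q^d*Z)))
    = q^d*Z * (1 - q^d*Z) / ((1 + q^r*Z) * (1 + q^(d-r)*Z)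
        * ((1 + q^r*(q^d*Z)) * (1 + q^(d-r)*(q^d*Z))))"
proof -
  have expand: "\<gamma> k = 1/(1 + q^r*Z) * (1/(1 + q^(d-r)*Z)) * (q^d*Z/(1 + q^d*Z))
        * (1/(1 + q^r*(q^d*Z))) * (1/(1 + q^(d-r)*(q^d*Z))) * (1/(1 + q^d*(q^d*Z)))
      - 1/(1 + q^r*Z) * (q^(d-r)*Z/(1 + q^(d-r)*Z)) * (1/(1 + q^d*Z))
        * (q^r*(q^d*Z)/(1 + q^r*(q^d*Z))) * (1/(1 + q^(d-r)*(q^d*Z))) * (1/(1 + q^d*(q^d*Z)))"
    unfolding \<gamma>_def pattern_prob_simps prob_event_or_compl_block Z_def
    by (simp only: if_True if_False mult_1_right mult.assoc power_Suc)
  show ?thesis unfolding expand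
  proof (rule recurrence_coefficient_second)
    show "q^(d-r)*Z * (q^r*(q^d*Z)) = q^d*Z * (q^d*Z)"
      by (simp add: power_d_eq_mult mult_ac)
  qed (use q in \<open>simp_all add: Z_def one_plus_q_power_nonzero\<close>)
qed

definition Phi_solution :: "nat \<Rightarrow> real" where
  "Phi_solution k = Phi (q^r) (q^(d-r)) (q^d) ((q^d)^k) * qpoch (- (q^d)) (q^d) k"

lemma Phi_solution_recurrence:
  "Phi_solution k = \<alpha> k * Phi_solution (Suc k) + \<gamma> k * Phi_solution (Suc (Suc k))"
proof -
  define Q Z where "Q = q^d" and "Z = Q^k"
  define \<rho> where "\<rho> = qpoch (- Q) Q k"
  define \<Phi> where "\<Phi> = Phi (q^r) (q^(d-r)) Q"
  have "Q < 1" "0 \<le> Z" "Z \<le> 1"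
    using power_d_bounds by (simp_all add: Q_def Z_def power_le_one)
  have PS: "Phi_solution (Suc k) = \<rho> * (1 + Q*Z) * \<Phi> (Q*Z)"
    "Phi_solution (Suc (Suc k)) = \<rho> * ((1 + Q*Z) * (1 + Q*(Q*Z))) * \<Phi> (Q*(Q*Z))"
    by (simp_all add: Phi_solution_def \<rho>_def \<Phi>_def Q_def Z_def qpoch_Suc mult_ac)
  have "\<alpha> k * Phi_solution (Suc k) + \<gamma> k * Phi_solution (Suc (Suc k))
      = \<rho> * ((\<alpha> k * (1 + Q*Z)) * \<Phi> (Q*Z) + (\<gamma> k * ((1 + Q*Z) * (1 + Q*(Q*Z)))) * \<Phi> (Q*(Q*Z)))"
    unfolding PS by (simp add: algebra_simps)
  also have "\<dots> = \<rho> * \<Phi> Z"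
    unfolding \<alpha>_eq[of k, folded Q_def Z_def] \<gamma>_eq[of k, folded Q_def Z_def] \<Phi>_def
    using q power_d_eq_mult \<open>Q < 1\<close> \<open>0 \<le> Z\<close> \<open>Z \<le> 1\<close>
    by (subst (2) Phi_q_difference) (auto simp: Q_def)
  also have "\<dots> = Phi_solution k"
    by (simp add: Phi_solution_def \<rho>_def \<Phi>_def Q_def Z_def)
  finally show ?thesis ..
qed

lemma pattern_prob_pos: "(\<forall>(b, i) \<in> set xs. 1 \<le> i) \<Longrightarrow> 0 < pattern_prob xs"
proof (induction xs)
  case (Cons x xs)
  obtain b i where "x = (b, i)" by fastforce
  moreover have "0 < q ^ i" using q by simp
  ultimately show ?case
    using Cons by (simp add: prob_event_or_compl_eq add_pos_pos)
qed simp

lemma u_pos_if_Suc_pos: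
  assumes "0 < u (Suc k)"
  shows "0 < u k"
proof -
  let ?P1 = "[(False, k*d + (d-r)), (False, Suc k * d)]"
  let ?P2 = "[(False, k*d + r), (True, k*d + (d-r)), (False, Suc k * d)]"
  let ?P2' = "[(True, Suc k * d + r), (False, Suc k * d + (d-r)), (False, Suc (Suc k) * d)]"
  let ?P3 = "[(False, k*d + r), (False, k*d + (d-r)), (True, Suc k * d),
      (False, Suc k * d + r), (False, Suc k * d + (d-r)), (False, Suc (Suc k) * d)]"
  have "0 < pattern_prob ?P1 * u (Suc k)"
    using r assms by (intro mult_pos_pos pattern_prob_pos) auto
  moreover have "0 \<le> prob (event_or_compl False (Suc k * d + r) \<inter> blocks_from (Suc k))"
    by simp
  then have "0 \<le> u (Suc k) - pattern_prob ?P2' * u (Suc (Suc k))"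
    using prob_compl_Int_blocks_from[of "Suc k"] by linarith
  then have "0 \<le> pattern_prob ?P2 * (u (Suc k) - pattern_prob ?P2' * u (Suc (Suc k)))"
    by (intro mult_nonneg_nonneg pattern_prob_bounds)
  moreover have "0 \<le> pattern_prob ?P3 * u (Suc (Suc k))"
    by (intro mult_nonneg_nonneg pattern_prob_bounds) (simp add: u_def)
  ultimately show ?thesis
    using u_eq_pattern_sum[of k] by linarith
qed

lemma prob_Union_E_from_le:
  assumes "1 \<le> m"
  shows "prob (\<Union>i. E (m + i)) \<le> q ^ m / (1 - q)"
proof -
  have events: "range (\<lambda>i. E (m + i)) \<subseteq> events" using E_in_events assms by auto
  have prob_E_le: "prob (E (m + i)) \<le> q ^ m * q ^ i" for i
    using prob_E[of "m + i"] q assms by (simp add: power_add divide_le_eq add_pos_nonneg)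
  have summable: "summable (\<lambda>i. q ^ m * q ^ i)" using q by simp
  then have summable_prob: "summable (\<lambda>i. prob (E (m + i)))"
    by (rule summable_comparison_test[rotated]) (use prob_E_le in auto)
  then have "prob (\<Union>i. E (m + i)) \<le> (\<Sum>i. prob (E (m + i)))"
    by (rule finite_measure_subadditive_countably[OF events])
  also have "\<dots> \<le> (\<Sum>i. q ^ m * q ^ i)"
    using prob_E_le summable summable_prob by (intro suminf_le) auto
  also have "\<dots> = q ^ m / (1 - q)" using q by (simp add: suminf_mult suminf_geometric)
  finally show ?thesis .
qed

lemma no_E_from_subset_blocks_from: "space M - (\<Union>i. E (K*d + r + i)) \<subseteq> blocks_from K"
proof
  fix \<omega> assume \<omega>: "\<omega> \<in> space M - (\<Union>i. E (K*d + r + i))"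
  have not_E: "\<omega> \<notin> E j" if "K*d + r \<le> j" for j
  proof -
    have "E j = E (K*d + r + (j - (K*d + r)))" using that by simp
    then show ?thesis using \<omega> by auto
  qed
  have "\<omega> \<in> blk M d r E n" if "K \<le> n" for n
  proof -
    have "K*d \<le> n*d" using that by simp
    then have "K*d + r \<le> n*d + r" "K*d + r \<le> n*d + (d-r)" "K*d + r \<le> n*d + d"
      using r by linarith+
    then show ?thesis
      using \<omega> not_E unfolding blk_eq by (auto simp: event_or_compl_def)
  qed
  then show "\<omega> \<in> blocks_from K" using \<omega> unfolding blocks_from_def by auto
qed

text \<open>Beyond a late enough block the constraints are met as soon as no event occurs at all,
  which has positive probability because \<open>\<Sum> P(E\<^sub>j) < \<infinity>\<close>.\<close>
lemma ex_u_pos: "\<exists>K. 0 < u K"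
proof -
  have "(\<lambda>n. q ^ n / (1 - q)) \<longlonglongrightarrow> 0 / (1 - q)"
    using q by (intro tendsto_divide LIMSEQ_power_zero) auto
  from LIMSEQ_D[OF this, of 1] obtain K where K: "q ^ K / (1 - q) < 1"
    using q by fastforce
  have "K * 1 \<le> K * d" using r by (intro mult_le_mono2) simp
  then have "K \<le> K*d + r" by linarith
  then have "q ^ (K*d + r) / (1 - q) \<le> q ^ K / (1 - q)"
    using q by (intro divide_right_mono power_decreasing) auto
  then have "prob (\<Union>i. E (K*d + r + i)) < 1"
    using prob_Union_E_from_le[of "K*d + r"] K r by simp
  moreover have "prob (space M - (\<Union>i. E (K*d + r + i))) \<le> u K"
    unfolding u_def using no_E_from_subset_blocks_from
    by (intro finite_measure_mono blocks_from_in_events)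
  moreover have "prob (space M - (\<Union>i. E (K*d + r + i))) = 1 - prob (\<Union>i. E (K*d + r + i))"
    using E_in_events r by (intro prob_compl) auto
  ultimately show ?thesis by (intro exI[of _ K]) linarith
qed

lemma u_0_pos: "0 < u 0"
proof -
  obtain K where "0 < u K" using ex_u_pos by blast
  then show ?thesis by (induction K) (auto intro: u_pos_if_Suc_pos)
qed

lemma Phi_solution_bounds:
  "0 \<le> Phi_solution k" "Phi_solution k \<le> (\<Sum>n. Phi_majorant (q^d) n) * exp (1 / (1 - q^d))"
proof -
  have "0 \<le> (q^d)^k" "(q^d)^k \<le> 1" using power_d_bounds by (simp_all add: power_le_one)
  then have "0 \<le> Phi (q^r) (q^(d-r)) (q^d) ((q^d)^k)"
    "Phi (q^r) (q^(d-r)) (q^d) ((q^d)^k) \<le> (\<Sum>n. Phi_majorant (q^d) n)"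
    using Phi_bounds[OF _ _ _ _ _ _, of "q^d" "(q^d)^k" "q^r" "q^(d-r)"] power_d_bounds q by auto
  moreover have "1 \<le> qpoch (- (q^d)) (q^d) k" "qpoch (- (q^d)) (q^d) k \<le> exp (1 / (1 - q^d))"
    using power_d_bounds by (simp_all add: qpoch_minus_ge_one qpoch_minus_self_le_exp)
  ultimately show "0 \<le> Phi_solution k"
    "Phi_solution k \<le> (\<Sum>n. Phi_majorant (q^d) n) * exp (1 / (1 - q^d))"
    unfolding Phi_solution_def by (auto intro!: mult_mono)
qed

lemma u_1_eq: "u 1 = (1 + q^r) * (1 + q^(d-r)) * (1 + q^d) * g3 (- (q^r)) (q^d) * u 0"
proof -
  define B where "B = 1 + (\<Sum>n. Phi_majorant (q^d) n) * exp (1 / (1 - q^d))"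
  have Y: "0 \<le> Phi_solution k" "Phi_solution k \<le> B - 1" for k
    using Phi_solution_bounds[of k] by (simp_all add: B_def)
  moreover have "0 \<le> u k" "u k \<le> 1" for k by (simp_all add: u_def)
  ultimately have "\<bar>u k\<bar> \<le> B" "\<bar>Phi_solution k\<bar> \<le> B" for k
    unfolding abs_le_iff using Y[of 0] by (smt (verit))+
  then have "u 0 * Phi_solution 1 = u 1 * Phi_solution 0"
    by (intro bounded_recurrence_solutions_Casoratian_zero[where A = u and Y = Phi_solution
        and c = "1/2" and B = B, OF u_recurrence Phi_solution_recurrence abs_\<gamma>_le]) auto
  moreover have "Phi_solution 0 = 1"
    by (simp add: Phi_solution_def Phi_at_1)
  moreover have "Phi_solution 1 = Phi (q^r) (q^(d-r)) (q^d) (q^d) * (1 + q^d)"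
    by (simp add: Phi_solution_def qpoch_Suc)
  moreover have "Phi (q^r) (q^(d-r)) (q^d) (q^d) = (1 + q^r) * (1 + q^(d-r)) * g3 (- (q^r)) (q^d)"
    using q power_d_bounds power_d_eq_mult by (intro Phi_at_base) simp_all
  ultimately show ?thesis by (simp add: mult_ac)
qed

lemma blocks_from_0_Int_1: "blocks_from 0 \<inter> blocks_from 1 = blocks_from 0"
  using blocks_from_Suc[of 0] by auto

lemma prob_none_Int_blocks_from_0:
  "prob ((space M - E r) \<inter> (space M - E (d - r)) \<inter> (space M - E d) \<inter> blocks_from 0)
    = u 1 / ((1 + q ^ r) * (1 + q ^ (d - r)) * (1 + q ^ d))"
proof -
  have "(space M - E r) \<inter> (space M - E (d - r)) \<inter> (space M - E d) \<inter> blocks_from 0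
    = pattern_Int [(False, 0*d + r), (False, 0*d + (d-r)), (False, Suc 0 * d)] (blocks_from 0)"
    by (auto simp: event_or_compl_def)
  then show ?thesis
    using prob_none_Int_blocks_from[of 0] r by (simp add: prob_event_or_compl_eq)
qed

end

theorem theorem4p1:
  fixes M :: "'a measure" and E :: "nat \<Rightarrow> 'a set" and q :: real and d r :: nat
  assumes "prob_space M"
    and "0 < q" "q < 1"
    and "d \<ge> 3" "1 \<le> r" "2 * r < d"
    and "prob_space.indep_events M E {1..}"
    and "\<And>j. j \<ge> 1 \<Longrightarrow> measure M (E j) = q ^ j / (1 + q ^ j)"
  shows "cond_prob M (Uset M d r E) (Vset M d r E)
           = 1 / ((1 + q ^ r) * (1 + q ^ (d - r)) * (1 + q ^ d)) * (1 / g3 (- (q ^ r)) (q ^ d))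
         \<and> cond_prob M ((space M - E r) \<inter> (space M - E (d - r)) \<inter> (space M - E d)) (Uset M d r E)
           = g3 (- (q ^ r)) (q ^ d)"
proof -
  \<comment> \<open>\<open>d \<ge> 3\<close> is implied by \<open>1 \<le> r\<close> and \<open>2 r < d\<close>.\<close>
  interpret block_events M E q d r
    by (intro block_events.intro indep_event_seq.intro indep_event_seq_axioms.intro
        block_events_axioms.intro) (fact assms)+
  define c where "c = (1 + q ^ r) * (1 + q ^ (d - r)) * (1 + q ^ d)"
  define g where "g = g3 (- (q ^ r)) (q ^ d)"
  have "0 < c" using assms(2) by (simp add: c_def add_pos_nonneg)
  have u_1: "u 1 = c * g * u 0" using u_1_eq by (simp add: c_def g_def)
  have UV: "Uset M d r E = blocks_from 0" "Vset M d r E = blocks_from 1"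
    by (simp_all add: Uset_def Vset_def blocks_from_def)
  have "cond_prob M (Uset M d r E) (Vset M d r E) = 1 / c * (1 / g)"
    unfolding cond_prob_def UV blocks_from_0_Int_1 u_def[symmetric] u_1 using u_0_pos by simp
  moreover have "cond_prob M ((space M - E r) \<inter> (space M - E (d - r)) \<inter> (space M - E d))
      (Uset M d r E) = g"
    unfolding cond_prob_def UV prob_none_Int_blocks_from_0 u_def[symmetric] u_1 c_def[symmetric]
    using u_0_pos \<open>0 < c\<close> by simp
  ultimately show ?thesis by (simp only: c_def g_def)
qed

end
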